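(* Fix $\alpha\in(0,1)$ and $p,q\in[0,1]$ with $q=\alpha p$. Then the set function $\mathcal{M}\mapsto R(p,q,\mathcal{M})$, defined on subsets $\mathcal{M}\subseteq\widetilde{S}(q)$, is monotonically non-decreasing and submodular.
   Context: Let $\mathcal{G}=(\mathcal{U},\mathcal{E})$ be a finite directed graph without self-loops, $\mathcal{U}=\{1,\dots,U\}$. For $u,v\in\mathcal{U}$, $D(u,v;\mathcal{G})$ denotes the number of edges of a shortest directed path from $u$ to $v$ in $\mathcal{G}$, with $D(u,v;\mathcal{G})=+\infty$ if there is no such path. For an integer $d\ge0$, the $d$-visible set of $u$ is $\mathcal{V}(u,d;\mathcal{G})=\{v\in\mathcal{U}: D(v,u;\mathcal{G})\le d\}$. Fix an integer social visibility threshold $\tau\ge1$. Let $\mathcal{R}\subseteq\mathcal{U}$ (requesters) and $\mathcal{S}\subseteq\mathcal{U}$ (suppliers) be disjoint. Each requester $u\in\mathcal{R}$ has a valuation $p_u\in[0,1]$ and each supplier $u\in\mathcal{S}$ has a valuation $q_u\in[0,1]$. For $p\in[0,1]$ let $\widetilde{R}(p)=\{u\in\mathcal{R}: p_u\ge p\}$ and for $q\in[0,1]$ let $\widetilde{S}(q)=\{u\in\mathcal{S}: q_u\le q\}$. For $\mathcal{M}\subseteq\mathcal{S}$ let $\widetilde{G}(p,\mathcal{M})$ be the graph obtained from $\mathcal{G}$ by adding a directed edge from every $s\in\mathcal{M}$ to every $r\in\widetilde{R}(p)$. For $u\in\widetilde{R}(p)$ let $I_u(p,\mathcal{M})=|\mathcal{V}(u,\tau;\widetilde{G}(p,\mathcal{M}))\setminus\mathcal{V}(u,\tau;\mathcal{G})|$,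 and $I(p,\mathcal{M})=\sum_{u\in\widetilde{R}(p)}I_u(p,\mathcal{M})$. The revenue is $R(p,q,\mathcal{M})=p\,I(p,\mathcal{M})-q\,I(p,\mathcal{M})$; when $q=\alpha p$ this equals $(1-\alpha)p\,I(p,\mathcal{M})$. *)

theory Defs
  imports Main "HOL-Library.Extended_Nat"
begin

text \<open>Directed graph on vertex set Uset with edge relation E (pairs (a,b) = edge a -> b).
  D(u,v;G): length of a shortest directed path from u to v, infinity if none.\<close>
definition sdist :: "(nat \<times> nat) set \<Rightarrow> nat \<Rightarrow> nat \<Rightarrow> enat" where
  "sdist E u v = (INF k \<in> {k. (u, v) \<in> E ^^ k}. enat k)"

definition visible :: "nat set \<Rightarrow> (nat \<times> nat) set \<Rightarrow> nat \<Rightarrow> nat \<Rightarrow> nat set" where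
  "visible Uset E u d = {v \<in> Uset. sdist E v u \<le> enat d}"

definition Rtil :: "nat set \<Rightarrow> (nat \<Rightarrow> real) \<Rightarrow> real \<Rightarrow> nat set" where
  "Rtil Rq pv p = {u \<in> Rq. pv u \<ge> p}"

definition Stil :: "nat set \<Rightarrow> (nat \<Rightarrow> real) \<Rightarrow> real \<Rightarrow> nat set" where
  "Stil Sq qv q = {u \<in> Sq. qv u \<le> q}"

definition Gtil :: "(nat \<times> nat) set \<Rightarrow> nat set \<Rightarrow> (nat \<Rightarrow> real) \<Rightarrow> real \<Rightarrow> nat set \<Rightarrow> (nat \<times> nat) set" where
  "Gtil E Rq pv p M = E \<union> (M \<times> Rtil Rq pv p)"

definition Iu :: "nat set \<Rightarrow> (nat \<times> nat) set \<Rightarrow> nat \<Rightarrow> nat set \<Rightarrow> (nat \<Rightarrow> real) \<Rightarrow> real \<Rightarrow> nat set \<Rightarrow> nat \<Rightarrow> nat" where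
  "Iu Uset E tau Rq pv p M u =
     card (visible Uset (Gtil E Rq pv p M) u tau - visible Uset E u tau)"

definition Itot :: "nat set \<Rightarrow> (nat \<times> nat) set \<Rightarrow> nat \<Rightarrow> nat set \<Rightarrow> (nat \<Rightarrow> real) \<Rightarrow> real \<Rightarrow> nat set \<Rightarrow> nat" where
  "Itot Uset E tau Rq pv p M = (\<Sum>u \<in> Rtil Rq pv p. Iu Uset E tau Rq pv p M u)"

definition revenue :: "nat set \<Rightarrow> (nat \<times> nat) set \<Rightarrow> nat \<Rightarrow> nat set \<Rightarrow> (nat \<Rightarrow> real) \<Rightarrow> real \<Rightarrow> real \<Rightarrow> nat set \<Rightarrow> real" where
  "revenue Uset E tau Rq pv p q M =
     p * real (Itot Uset E tau Rq pv p M) - q * real (Itot Uset E tau Rq pv p M)"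

definition monotone_setfun_on :: "'a set \<Rightarrow> ('a set \<Rightarrow> real) \<Rightarrow> bool" where
  "monotone_setfun_on X f \<longleftrightarrow> (\<forall>A B. A \<subseteq> B \<and> B \<subseteq> X \<longrightarrow> f A \<le> f B)"

definition submodular_on :: "'a set \<Rightarrow> ('a set \<Rightarrow> real) \<Rightarrow> bool" where
  "submodular_on X f \<longleftrightarrow>
     (\<forall>A B. A \<subseteq> X \<and> B \<subseteq> X \<longrightarrow> f (A \<union> B) + f (A \<inter> B) \<le> f A + f B)"

end

theory Submission
  imports Defs
begin

text \<open>Adding the edges \<open>M \<times> R\<close> can only make a vertex \<open>v\<close> newly visible to a requester
  \<open>u \<in> R\<close> through a path that ends with one of the new edges \<open>s \<rightarrow> u\<close>, \<open>s \<in> M\<close>. Hence the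
  increase in visibility of \<open>u\<close> is the size of a union over \<open>s \<in> M\<close> of sets depending only
  on \<open>u\<close> and \<open>s\<close>, i.e. a coverage function of \<open>M\<close>; coverage functions are monotone and submodular,
  and so are their sums and non-negative multiples, such as \<open>(1 - \<alpha>) p I(p, M)\<close>.\<close>

lemma sdist_le_enat_iff: "sdist E v u \<le> enat d \<longleftrightarrow> (\<exists>k\<le>d. (v, u) \<in> E ^^ k)"
proof
  assume le: "sdist E v u \<le> enat d"
  show "\<exists>k\<le>d. (v, u) \<in> E ^^ k"
  proof (cases "\<exists>k. (v, u) \<in> E ^^ k")
    case False
    then show ?thesis using le by (simp add: sdist_def top_enat_def)
  next
    case True
    let ?m = "LEAST k. (v, u) \<in> E ^^ k"
    have m: "(v, u) \<in> E ^^ ?m" using True by (rule LeastI_ex)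
    have "sdist E v u = enat ?m"
      unfolding sdist_def
      by (rule antisym, rule INF_lower, use m in simp,
          rule INF_greatest, auto intro: Least_le)
    with le m show ?thesis by auto
  qed
next
  assume "\<exists>k\<le>d. (v, u) \<in> E ^^ k"
  then obtain k where "k \<le> d" "(v, u) \<in> E ^^ k" by auto
  then have "sdist E v u \<le> enat k" unfolding sdist_def by (intro INF_lower) auto
  with \<open>k \<le> d\<close> show "sdist E v u \<le> enat d" by (meson enat_ord_simps(1) order_trans)
qed

lemma relpow_Un_Times_cases:
  "(v, w) \<in> (E \<union> M \<times> R) ^^ k \<Longrightarrow> (v, w) \<in> E ^^ k \<or> (\<exists>s\<in>M. \<exists>j<k. (v, s) \<in> E ^^ j)"
proof (induction k arbitrary: w)
  case 0
  then show ?case by simp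
next
  case (Suc k)
  then obtain x where x: "(v, x) \<in> (E \<union> M \<times> R) ^^ k" "(x, w) \<in> E \<union> M \<times> R" by auto
  from Suc.IH[OF x(1)] show ?case
  proof
    assume "(v, x) \<in> E ^^ k"
    then show ?thesis using x(2) by (cases "(x, w) \<in> E") auto
  next
    assume "\<exists>s\<in>M. \<exists>j<k. (v, s) \<in> E ^^ j"
    then show ?thesis using less_SucI by blast
  qed
qed

lemma relpow_Un_Times_reach_iff:
  assumes "u \<in> R"
  shows "(\<exists>k\<le>d. (v, u) \<in> (E \<union> M \<times> R) ^^ k) \<longleftrightarrow>
         (\<exists>k\<le>d. (v, u) \<in> E ^^ k) \<or> (\<exists>s\<in>M. \<exists>j<d. (v, s) \<in> E ^^ j)"
proof
  assume "\<exists>k\<le>d. (v, u) \<in> (E \<union> M \<times> R) ^^ k"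
  then obtain k where k: "k \<le> d" "(v, u) \<in> (E \<union> M \<times> R) ^^ k" by auto
  from relpow_Un_Times_cases[OF k(2)] k(1)
  show "(\<exists>k\<le>d. (v, u) \<in> E ^^ k) \<or> (\<exists>s\<in>M. \<exists>j<d. (v, s) \<in> E ^^ j)"
    by (auto intro: order_less_le_trans)
next
  have into_Un: "(x, y) \<in> (E \<union> M \<times> R) ^^ n" if "(x, y) \<in> E ^^ n" for x y n
    using relpowp_mono[to_set, of E "E \<union> M \<times> R"] that by blast
  assume "(\<exists>k\<le>d. (v, u) \<in> E ^^ k) \<or> (\<exists>s\<in>M. \<exists>j<d. (v, s) \<in> E ^^ j)"
  then show "\<exists>k\<le>d. (v, u) \<in> (E \<union> M \<times> R) ^^ k"
  proof
    assume "\<exists>k\<le>d. (v, u) \<in> E ^^ k"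
    then show ?thesis using into_Un by blast
  next
    assume "\<exists>s\<in>M. \<exists>j<d. (v, s) \<in> E ^^ j"
    then obtain s j where "s \<in> M" "j < d" "(v, s) \<in> E ^^ j" by auto
    then have "(v, u) \<in> (E \<union> M \<times> R) ^^ Suc j"
      using assms by (blast intro: relpow_Suc_I into_Un)
    with \<open>j < d\<close> show ?thesis by (meson Suc_leI)
  qed
qed

text \<open>The vertices that become \<open>d\<close>-visible to \<open>u\<close> once the edge \<open>s \<rightarrow> u\<close> is added.\<close>
definition gained_viewers :: "nat set \<Rightarrow> (nat \<times> nat) set \<Rightarrow> nat \<Rightarrow> nat \<Rightarrow> nat \<Rightarrow> nat set" where
  "gained_viewers Uset E d u s = {v \<in> Uset. \<exists>j<d. (v, s) \<in> E ^^ j} - visible Uset E u d"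

lemma visible_Gtil_diff:
  assumes "u \<in> Rtil Rq pv p"
  shows "visible Uset (Gtil E Rq pv p M) u d - visible Uset E u d
       = (\<Union>s\<in>M. gained_viewers Uset E d u s)"
  unfolding visible_def gained_viewers_def Gtil_def sdist_le_enat_iff
  using relpow_Un_Times_reach_iff[OF assms, of d _ E M] by auto

lemma revenue_eq_coverage_sum:
  "revenue Uset E tau Rq pv p q M
     = (p - q) * real (\<Sum>u\<in>Rtil Rq pv p. card (\<Union>s\<in>M. gained_viewers Uset E tau u s))"
proof -
  have "Itot Uset E tau Rq pv p M = (\<Sum>u\<in>Rtil Rq pv p. card (\<Union>s\<in>M. gained_viewers Uset E tau u s))"
    unfolding Itot_def Iu_def by (rule sum.cong) (simp_all add: visible_Gtil_diff)
  then show ?thesis unfolding revenue_def by (simp add: left_diff_distrib)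
qed

lemma card_UN_Un_Int_le:
  fixes C :: "'b \<Rightarrow> 'a set"
  assumes "finite X" "\<And>s. C s \<subseteq> X"
  shows "card (\<Union>s\<in>A \<union> B. C s) + card (\<Union>s\<in>A \<inter> B. C s)
       \<le> card (\<Union>s\<in>A. C s) + card (\<Union>s\<in>B. C s)"
proof -
  have fin: "finite (\<Union>s\<in>A. C s)" "finite (\<Union>s\<in>B. C s)"
    using assms by (auto intro: finite_subset)
  have "card (\<Union>s\<in>A \<inter> B. C s) \<le> card ((\<Union>s\<in>A. C s) \<inter> (\<Union>s\<in>B. C s))"
    using fin by (intro card_mono) auto
  moreover have UN_Un: "(\<Union>s\<in>A \<union> B. C s) = (\<Union>s\<in>A. C s) \<union> (\<Union>s\<in>B. C s)" by auto
  moreover have "card ((\<Union>s\<in>A. C s) \<union> (\<Union>s\<in>B. C s)) + card ((\<Union>s\<in>A. C s) \<inter> (\<Union>s\<in>B. C s))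
      = card (\<Union>s\<in>A. C s) + card (\<Union>s\<in>B. C s)"
    using fin by (rule card_Un_Int[symmetric])
  ultimately show ?thesis unfolding UN_Un by linarith
qed

lemma monotone_setfun_on_coverage_sum:
  fixes C :: "'u \<Rightarrow> 'b \<Rightarrow> 'a set"
  assumes "finite X" "\<And>u s. C u s \<subseteq> X" "0 \<le> c"
  shows "monotone_setfun_on Y (\<lambda>M. c * real (\<Sum>u\<in>R. card (\<Union>s\<in>M. C u s)))"
  unfolding monotone_setfun_on_def
proof (intro allI impI)
  fix A B assume "A \<subseteq> B \<and> B \<subseteq> Y"
  moreover have "finite (\<Union>s\<in>B. C u s)" for u
    using assms by (blast intro: finite_subset)
  ultimately have "(\<Sum>u\<in>R. card (\<Union>s\<in>A. C u s)) \<le> (\<Sum>u\<in>R. card (\<Union>s\<in>B. C u s))"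
    by (intro sum_mono card_mono) auto
  then show "c * real (\<Sum>u\<in>R. card (\<Union>s\<in>A. C u s)) \<le> c * real (\<Sum>u\<in>R. card (\<Union>s\<in>B. C u s))"
    using assms(3) by (meson mult_left_mono of_nat_mono)
qed

lemma submodular_on_coverage_sum:
  fixes C :: "'u \<Rightarrow> 'b \<Rightarrow> 'a set"
  assumes "finite X" "\<And>u s. C u s \<subseteq> X" "0 \<le> c"
  shows "submodular_on Y (\<lambda>M. c * real (\<Sum>u\<in>R. card (\<Union>s\<in>M. C u s)))"
  unfolding submodular_on_def
proof (intro allI impI)
  fix A B
  let ?f = "\<lambda>M. real (\<Sum>u\<in>R. card (\<Union>s\<in>M. C u s))"
  have "(\<Sum>u\<in>R. card (\<Union>s\<in>A \<union> B. C u s)) + (\<Sum>u\<in>R. card (\<Union>s\<in>A \<inter> B. C u s))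
      \<le> (\<Sum>u\<in>R. card (\<Union>s\<in>A. C u s)) + (\<Sum>u\<in>R. card (\<Union>s\<in>B. C u s))"
    unfolding sum.distrib[symmetric]
    by (intro sum_mono card_UN_Un_Int_le[OF assms(1,2)])
  then have "?f (A \<union> B) + ?f (A \<inter> B) \<le> ?f A + ?f B"
    by linarith
  then have "c * (?f (A \<union> B) + ?f (A \<inter> B)) \<le> c * (?f A + ?f B)"
    using assms(3) by (rule mult_left_mono)
  then show "c * ?f (A \<union> B) + c * ?f (A \<inter> B) \<le> c * ?f A + c * ?f B"
    by (simp add: distrib_left)
qed

theorem theorem2:
  fixes U tau :: nat and E :: "(nat \<times> nat) set" and Rq Sq :: "nat set"
    and pv qv :: "nat \<Rightarrow> real" and \<alpha> p q :: real
  assumes "E \<subseteq> {1..U} \<times> {1..U}"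
    and "\<forall>u. (u, u) \<notin> E"
    and "tau \<ge> 1"
    and "Rq \<subseteq> {1..U}" and "Sq \<subseteq> {1..U}" and "Rq \<inter> Sq = {}"
    and "\<forall>u \<in> Rq. 0 \<le> pv u \<and> pv u \<le> 1"
    and "\<forall>u \<in> Sq. 0 \<le> qv u \<and> qv u \<le> 1"
    and "0 < \<alpha>" and "\<alpha> < 1"
    and "0 \<le> p" and "p \<le> 1" and "0 \<le> q" and "q \<le> 1"
    and "q = \<alpha> * p"
  shows "monotone_setfun_on (Stil Sq qv q) (revenue {1..U} E tau Rq pv p q)
       \<and> submodular_on (Stil Sq qv q) (revenue {1..U} E tau Rq pv p q)"
proof -
  have "q \<le> p"
    using assms(9-11,15) by (simp add: mult_left_le_one_le)
  then have nonneg: "0 \<le> p - q" by simp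
  have fin: "finite {1..U}" by simp
  have sub: "gained_viewers {1..U} E tau u s \<subseteq> {1..U}" for u s
    unfolding gained_viewers_def by auto
  let ?C = "gained_viewers {1..U} E tau"
  show ?thesis
    unfolding revenue_eq_coverage_sum[abs_def]
    using monotone_setfun_on_coverage_sum[of _ ?C, OF fin sub nonneg]
      submodular_on_coverage_sum[of _ ?C, OF fin sub nonneg] by blast
qed

end
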